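(* For every integer $q\ge1$ and integer $k\ge0$, (a) $\displaystyle\sum_{l_1,l_2\in\mathbb Z}H_q(l_1,l_2,k)=\begin{cases}0,&k\ge2,\\ 2^{-4q}(2q-1)c_q,&k=1,\\ 2^{-4q}c_q,&k=0;\end{cases}$ (b) $\displaystyle\sum_{l_1,l_2\in\mathbb Z}H'_q(l_1,l_2,k)=\begin{cases}0,&k\ge2,\\ 2^{-4q}(2q-1)(2q-2)c_q,&k=1,\\ 2^{-4q}(2q-1)c_q,&k=0.\end{cases}$
   Context: $(z)_k=z(z+1)\cdots(z+k-1)$ denotes the rising factorial. For integers $l_1,l_2,k$ and $q\ge1$, \[ H_q(l_{1},l_{2},k)=\frac{(-1)^{l_1+l_2}\left(-\frac{1}{2}\right)_{l_1} \left(-\frac{1}{2}\right)_{l_2} \left(\frac{1}{2}\right)_{q-l_{1}} \left(\frac{1}{2}\right)_{q-l_{2}}}{(2q-l_{1}-l_{2}-k)!\,(l_{2}-l_{1}+k)!\,(l_{1}-l_{2}+k)!\,(l_{1}+l_{2}-k)!}, \] where all Pochhammer symbols and factorials are expressed via the Gamma function ($(z)_k=\Gamma(z+k)/\Gamma(z)$, $m!=\Gamma(m+1)$), with $1/\Gamma$ vanishing at non-positive integers (so only finitely many terms are non-zero); and $H'_q(l_1,l_2,k)=(2q-l_1-l_2-k)H_q(l_1,l_2,k)$. Also $c_q=\frac{2^{4q}}{2q\binom{2q}{q}}$. *)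

theory Defs
  imports "HOL-Analysis.Analysis"
begin

definition poch_G :: "real \<Rightarrow> int \<Rightarrow> real" where
  "poch_G z k = Gamma (z + of_int k) / Gamma z"

text \<open>1/m! = 1/Gamma(m+1), with 1/Gamma vanishing at non-positive integers (rGamma).\<close>
definition inv_fact_G :: "int \<Rightarrow> real" where
  "inv_fact_G m = rGamma (of_int m + 1)"

definition H :: "int \<Rightarrow> int \<Rightarrow> int \<Rightarrow> int \<Rightarrow> real" where
  "H q l1 l2 k =
     (-1) powi (l1 + l2) * poch_G (-1/2) l1 * poch_G (-1/2) l2
       * poch_G (1/2) (q - l1) * poch_G (1/2) (q - l2)
       * inv_fact_G (2*q - l1 - l2 - k) * inv_fact_G (l2 - l1 + k)
       * inv_fact_G (l1 - l2 + k) * inv_fact_G (l1 + l2 - k)"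

definition H' :: "int \<Rightarrow> int \<Rightarrow> int \<Rightarrow> int \<Rightarrow> real" where
  "H' q l1 l2 k = of_int (2*q - l1 - l2 - k) * H q l1 l2 k"

definition c_q :: "nat \<Rightarrow> real" where
  "c_q q = 2 ^ (4*q) / (2 * real q * real ((2*q) choose q))"

end

theory Submission
  imports Defs
begin

text \<open>
  Put $Q_{L,i} = (x^2+1)^{L-i}(x^2-1)^i$ and let $\Lambda_g^c(p) = \sum_i g(i-c) [x^i]p$ be the
  $g$-moment about $c$ of the coefficient sequence of $p$. Because $(x^2-1)^2 = (x^2+1)^2 - 4x^2$,
  the absolute moments $\Lambda_{|\cdot|}^{2n}(Q_{2n,j})$ obey a two-step recursion in $n$ and $j$:
  they vanish for odd $j$ (reflection symmetry) and equal $\kappa_n (-1)^a (-1/2)_a (1/2)_{n-a}$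
  for $j = 2a$. With $r = l_1+l_2-k$, $s = l_1-l_2+k$ and $M = 2q-2k$, the summand $H_q(l_1,l_2,k)$
  is therefore $\binom{M}{r}\binom{2k}{s}\Lambda(Q_{2q,r+s})\Lambda(Q_{2q,r+2k-s})$ up to a constant.
  Summing over $r, s$ applies the bilinear functional $\Lambda\otimes\Lambda$ to the identity
  $\sum_{r,s}\binom{M}{r}\binom{K}{s} Q_{N,r+s}(z) Q_{N,r+K-s}(w)
    = 2^{M+K}((1+z^2)(1+w^2))^{N-M-K} Q_{M+K,K}(zw)$,
  which is the binomial theorem for $2(1+z^2w^2)$ and $2(z^2w^2-1)$. Its right side is diagonal in
  $z, w$, so only the second moments $\Lambda_{t^2}^L(Q_{L,2k})$ survive, and these are $L 2^L$,
  $2^{L+1}$ and $0$ for $k = 0$, $k = 1$ and $k \ge 2$. For $H'$ the extra weight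
  $2q-l_1-l_2-k = M-r$ is absorbed by $(M-r)\binom{M}{r} = M\binom{M-1}{r}$, which leads to the
  same identity with $N = M+K+1$.
\<close>

section \<open>Pairing coefficient sequences with weights\<close>

definition coeff_pairing :: "(nat \<Rightarrow> real) \<Rightarrow> real poly \<Rightarrow> real" where
  "coeff_pairing \<phi> p = (\<Sum>i\<le>degree p. \<phi> i * coeff p i)"

lemma coeff_pairing_eq_sum:
  assumes "degree p \<le> N"
  shows "coeff_pairing \<phi> p = (\<Sum>i\<le>N. \<phi> i * coeff p i)"
  unfolding coeff_pairing_def
  by (rule sum.mono_neutral_left) (use assms in \<open>auto simp: coeff_eq_0\<close>)

lemma coeff_pairing_add: "coeff_pairing \<phi> (p + q) = coeff_pairing \<phi> p + coeff_pairing \<phi> q"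
proof -
  define N where "N = max (degree p) (degree q)"
  have "degree (p + q) \<le> N" "degree p \<le> N" "degree q \<le> N"
    by (auto simp: N_def degree_add_le)
  then show ?thesis
    by (simp add: coeff_pairing_eq_sum distrib_left sum.distrib)
qed

lemma coeff_pairing_minus: "coeff_pairing \<phi> (- p) = - coeff_pairing \<phi> p"
  by (simp add: coeff_pairing_def sum_negf)

lemma coeff_pairing_diff: "coeff_pairing \<phi> (p - q) = coeff_pairing \<phi> p - coeff_pairing \<phi> q"
proof -
  define N where "N = max (degree p) (degree q)"
  have "degree (p - q) \<le> N" "degree p \<le> N" "degree q \<le> N"
    by (auto simp: N_def degree_diff_le)
  then show ?thesis
    by (simp add: coeff_pairing_eq_sum algebra_simps sum_subtractf)
qed

lemma coeff_pairing_smult: "coeff_pairing \<phi> (smult c p) = c * coeff_pairing \<phi> p"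
  by (simp add: coeff_pairing_eq_sum[OF degree_smult_le] coeff_pairing_def sum_distrib_left mult_ac)

lemma coeff_pairing_sum_smult:
  "finite I \<Longrightarrow> coeff_pairing \<phi> (\<Sum>i\<in>I. smult (c i) (p i)) = (\<Sum>i\<in>I. c i * coeff_pairing \<phi> (p i))"
  by (induction I rule: finite_induct) (simp_all add: coeff_pairing_add coeff_pairing_smult, simp add: coeff_pairing_def)

lemma coeff_pairing_weight_add:
  "coeff_pairing (\<lambda>i. \<phi> i + \<psi> i) p = coeff_pairing \<phi> p + coeff_pairing \<psi> p"
  by (simp add: coeff_pairing_def distrib_right sum.distrib)

lemma coeff_pairing_weight_scale:
  "coeff_pairing (\<lambda>i. c * \<phi> i) p = c * coeff_pairing \<phi> p"
  by (simp add: coeff_pairing_def sum_distrib_left mult_ac)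

lemma coeff_pairing_const: "coeff_pairing (\<lambda>_. c) p = c * poly p 1"
  by (simp add: coeff_pairing_def poly_altdef sum_distrib_left)

lemma coeff_pairing_delta: "coeff_pairing (\<lambda>i. if i = c then 1 else 0) p = coeff p c"
  by (cases "c \<le> degree p") (auto simp: coeff_pairing_def coeff_eq_0 if_distrib[of "\<lambda>x. x * _"] cong: if_cong)

lemma coeff_pairing_monom: "coeff_pairing \<phi> (monom c t) = c * \<phi> t"
  by (simp add: coeff_pairing_eq_sum[of _ t] degree_monom_le coeff_monom if_distrib[of "\<lambda>x. _ * x"] mult.commute cong: if_cong)

lemma coeff_pairing_monom_mult:
  "coeff_pairing \<phi> (monom 1 j * p) = coeff_pairing (\<lambda>i. \<phi> (i + j)) p"
proof -
  have "coeff_pairing \<phi> (monom 1 j * p) = (\<Sum>i\<le>degree p + j. \<phi> i * coeff (monom 1 j * p) i)"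
    by (rule coeff_pairing_eq_sum) (simp add: degree_mult_le[THEN order_trans] degree_monom_le add.commute)
  also have "\<dots> = (\<Sum>i=j..degree p + j. \<phi> i * coeff p (i - j))"
    by (rule sum.mono_neutral_cong_right) (auto simp: coeff_monom_mult)
  also have "\<dots> = coeff_pairing (\<lambda>i. \<phi> (i + j)) p"
    using sum.shift_bounds_cl_nat_ivl[of "\<lambda>i. \<phi> i * coeff p (i - j)" 0 j "degree p"]
    by (simp add: coeff_pairing_def atLeast0AtMost)
  finally show ?thesis .
qed

lemma coeff_pairing_bilinear:
  fixes a :: "'i \<Rightarrow> real" and P R :: "'i \<Rightarrow> real poly"
    and b :: "'j \<Rightarrow> real" and U V :: "'j \<Rightarrow> real poly"
  assumes "finite I" "finite J"
    and eq: "\<And>z w. (\<Sum>i\<in>I. a i * (poly (P i) z * poly (R i) w))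
                   = (\<Sum>j\<in>J. b j * (poly (U j) z * poly (V j) w))"
  shows "(\<Sum>i\<in>I. a i * (coeff_pairing \<phi> (P i) * coeff_pairing \<psi> (R i)))
       = (\<Sum>j\<in>J. b j * (coeff_pairing \<phi> (U j) * coeff_pairing \<psi> (V j)))"
proof -
  have in_z: "(\<Sum>i\<in>I. smult (a i * poly (R i) w) (P i))
      = (\<Sum>j\<in>J. smult (b j * poly (V j) w) (U j))" for w
    by (rule poly_ext) (simp add: poly_sum eq mult_ac)
  have in_w: "(\<Sum>i\<in>I. smult (a i * coeff_pairing \<phi> (P i)) (R i))
      = (\<Sum>j\<in>J. smult (b j * coeff_pairing \<phi> (U j)) (V j))"
  proof (rule poly_ext)
    fix w
    show "poly (\<Sum>i\<in>I. smult (a i * coeff_pairing \<phi> (P i)) (R i)) w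
        = poly (\<Sum>j\<in>J. smult (b j * coeff_pairing \<phi> (U j)) (V j)) w"
      using arg_cong[OF in_z[of w], of "coeff_pairing \<phi>"]
      by (simp add: poly_sum coeff_pairing_sum_smult assms mult_ac)
  qed
  show ?thesis
    using arg_cong[OF in_w, of "coeff_pairing \<psi>"] by (simp add: coeff_pairing_sum_smult assms mult_ac)
qed

lemma coeff_pairing_reflect_poly:
  assumes "\<And>i. i \<le> degree p \<Longrightarrow> \<phi> (degree p - i) = \<phi> i"
  shows "coeff_pairing \<phi> (reflect_poly p) = coeff_pairing \<phi> p"
proof -
  have "coeff_pairing \<phi> (reflect_poly p) = (\<Sum>i\<le>degree p. \<phi> i * coeff p (degree p - i))"
    by (simp add: coeff_pairing_eq_sum[OF degree_reflect_poly_le] coeff_reflect_poly)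
  also have "\<dots> = (\<Sum>i\<le>degree p. \<phi> (degree p - i) * coeff p i)"
    by (rule sum.reindex_bij_witness[where i="\<lambda>i. degree p - i" and j="\<lambda>i. degree p - i"]) auto
  also have "\<dots> = coeff_pairing \<phi> p"
    by (simp add: coeff_pairing_def assms)
  finally show ?thesis .
qed

lemma coeff_odd_eq_0_if_poly_even:
  fixes p :: "real poly"
  assumes "\<And>z. poly p (- z) = poly p z" and "odd t"
  shows "coeff p t = 0"
proof -
  have "p \<circ>\<^sub>p [:0, -1:] = p"
    by (rule poly_ext) (simp add: poly_pcompose assms(1))
  then have "(-1) ^ t * coeff p t = coeff p t"
    by (metis coeff_pcompose_linear)
  with assms(2) show ?thesis by simp
qed

definition central_moment :: "(real \<Rightarrow> real) \<Rightarrow> nat \<Rightarrow> real poly \<Rightarrow> real" where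
  "central_moment g c p = coeff_pairing (\<lambda>i. g (real i - real c)) p"

lemma central_moment_monom_mult:
  "central_moment g (c + j) (monom 1 j * p) = central_moment g c p"
  by (simp add: central_moment_def coeff_pairing_monom_mult)

lemma coeff_pairing_sq_plus_one_mult:
  "coeff_pairing \<phi> ([:1, 0, 1:] * p) = coeff_pairing (\<lambda>i. \<phi> i + \<phi> (i + 2)) p"
proof -
  have "[:1, 0, 1:] = 1 + monom (1 :: real) 2"
    by (rule poly_eqI) (simp add: coeff_pCons coeff_monom split: nat.split)
  then have "coeff_pairing \<phi> ([:1, 0, 1:] * p) = coeff_pairing \<phi> p + coeff_pairing \<phi> (monom 1 2 * p)"
    by (simp only: distrib_right mult_1 coeff_pairing_add)
  then show ?thesis
    by (simp add: coeff_pairing_monom_mult coeff_pairing_weight_add)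
qed

lemma abs_moment_sq_plus_one_mult:
  "central_moment abs (Suc c) ([:1, 0, 1:] * p) = 2 * central_moment abs c p + 2 * coeff p c"
proof -
  have "\<bar>real i - real (Suc c)\<bar> + \<bar>real (i + 2) - real (Suc c)\<bar>
      = 2 * \<bar>real i - real c\<bar> + 2 * (if i = c then 1 else 0)" for i
    by (cases i c rule: linorder_cases) auto
  then show ?thesis
    unfolding central_moment_def coeff_pairing_sq_plus_one_mult
    by (simp add: coeff_pairing_weight_add coeff_pairing_weight_scale coeff_pairing_delta)
qed

lemma sq_moment_sq_plus_one_mult:
  "central_moment (\<lambda>t. t\<^sup>2) (Suc c) ([:1, 0, 1:] * p) = 2 * central_moment (\<lambda>t. t\<^sup>2) c p + 2 * poly p 1"
proof -
  have "(real i - real (Suc c))\<^sup>2 + (real (i + 2) - real (Suc c))\<^sup>2 = 2 * (real i - real c)\<^sup>2 + 2" for i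
    by (simp add: power2_eq_square algebra_simps)
  then show ?thesis
    unfolding central_moment_def coeff_pairing_sq_plus_one_mult
    by (simp add: coeff_pairing_weight_add coeff_pairing_weight_scale coeff_pairing_const)
qed

section \<open>The polynomials $(x^2+1)^{L-i}(x^2-1)^i$ and their moments\<close>

definition Q_poly :: "nat \<Rightarrow> nat \<Rightarrow> real poly" where
  "Q_poly L i = [:1, 0, 1:] ^ (L - i) * [:-1, 0, 1:] ^ i"

lemma poly_Q_poly: "poly (Q_poly L i) z = (1 + z\<^sup>2) ^ (L - i) * (z\<^sup>2 - 1) ^ i"
  by (simp add: Q_poly_def power2_eq_square)

lemma degree_Q_poly: "i \<le> L \<Longrightarrow> degree (Q_poly L i) = 2 * L"
  by (simp add: Q_poly_def degree_mult_eq degree_power_eq)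

lemma coeff_Q_poly_odd: "odd t \<Longrightarrow> coeff (Q_poly L i) t = 0"
  by (rule coeff_odd_eq_0_if_poly_even) (simp_all add: poly_Q_poly)

lemma Q_poly_add_2:
  assumes "j \<le> L"
  shows "Q_poly (L + 2) (j + 2) = Q_poly (L + 2) j - smult 4 (monom 1 2 * Q_poly L j)"
proof -
  define A B :: "real poly" where "A = [:1, 0, 1:]" and "B = [:-1, 0, 1:]"
  have B_sq: "B\<^sup>2 = A\<^sup>2 - smult 4 (monom 1 2)"
    by (simp add: A_def B_def monom_altdef power2_eq_square)
  have "Q_poly (L + 2) (j + 2) = A ^ (L - j) * B ^ j * B\<^sup>2"
    unfolding Q_poly_def A_def [symmetric] B_def [symmetric] by (simp add: power_add power2_eq_square)
  also have "\<dots> = A ^ (L - j) * A\<^sup>2 * B ^ j - smult 4 (monom 1 2 * (A ^ (L - j) * B ^ j))"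
    by (simp add: B_sq algebra_simps)
  also have "A ^ (L - j) * A\<^sup>2 = A ^ (L + 2 - j)"
    using assms by (simp only: power_add [symmetric] Nat.add_diff_assoc2)
  finally show ?thesis
    by (simp only: Q_poly_def A_def B_def mult.assoc)
qed

lemma central_moment_Q_poly_add_2:
  assumes "j \<le> L"
  shows "central_moment g (L + 2) (Q_poly (L + 2) (j + 2))
       = central_moment g (L + 2) (Q_poly (L + 2) j) - 4 * central_moment g L (Q_poly L j)"
  unfolding Q_poly_add_2[OF assms] central_moment_monom_mult [of g L 2, symmetric]
  by (simp only: central_moment_def coeff_pairing_diff coeff_pairing_smult)

lemma reflect_Q_poly: "reflect_poly (Q_poly L i) = (-1) ^ i * Q_poly L i"
proof -
  define A B :: "real poly" where "A = [:1, 0, 1:]" and "B = [:-1, 0, 1:]"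
  have "reflect_poly A = A" and "reflect_poly B = - B"
    by (simp_all add: A_def B_def reflect_poly_def)
  then show ?thesis
    unfolding Q_poly_def A_def [symmetric] B_def [symmetric]
    by (simp add: reflect_poly_mult reflect_poly_power power_minus' mult_ac)
qed

lemma central_moment_Q_poly_odd:
  assumes g_even: "\<And>t. g (- t) = g t" and "odd i" and "i \<le> L"
  shows "central_moment g L (Q_poly L i) = 0"
proof -
  have "g (real (2 * L - x) - real L) = g (real x - real L)" if "x \<le> 2 * L" for x
  proof -
    have "real (2 * L - x) - real L = - (real x - real L)"
      using that by (simp add: of_nat_diff)
    then show ?thesis
      by (simp only: g_even)
  qed
  then have "central_moment g L (reflect_poly (Q_poly L i)) = central_moment g L (Q_poly L i)"
    unfolding central_moment_def
    by (intro coeff_pairing_reflect_poly) (simp add: degree_Q_poly assms(3))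
  with assms(2) show ?thesis
    by (simp add: reflect_Q_poly central_moment_def coeff_pairing_minus)
qed

lemma coeff_sq_plus_one_power_even: "coeff ([:1, 0, 1:] ^ n) (2 * k) = real (n choose k)"
proof -
  have "[:1, 0, 1:] = monom (1 :: real) 2 + 1"
    by (rule poly_eqI) (simp add: coeff_pCons coeff_monom split: nat.split)
  then have "[:1, 0, 1:] ^ n = (\<Sum>j\<le>n. monom (real (n choose j)) (2 * j))"
    by (simp add: binomial_ring monom_power of_nat_mult_conv_smult smult_monom mult.commute)
  then show ?thesis
    by (simp add: coeff_sum coeff_monom binomial_eq_0)
qed

lemma coeff_sq_plus_one_power_odd: "odd t \<Longrightarrow> coeff ([:1, 0, 1:] ^ n :: real poly) t = 0"
  by (rule coeff_odd_eq_0_if_poly_even) simp_all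

definition abs_moment_scale :: "nat \<Rightarrow> real" where
  "abs_moment_scale n = 2 * 4 ^ n * real n / fact n"

definition half_poch_weight :: "nat \<Rightarrow> nat \<Rightarrow> real" where
  "half_poch_weight n a = (-1) ^ a * pochhammer (-1/2) a * pochhammer (1/2) (n - a)"

lemma abs_moment_scale_Suc: "abs_moment_scale (Suc n) = 8 * 4 ^ n / fact n"
  by (simp add: abs_moment_scale_def field_simps del: of_nat_Suc)

lemma abs_moment_sq_plus_one_power:
  "central_moment abs (2 * n) ([:1, 0, 1:] ^ (2 * n)) = abs_moment_scale n * pochhammer (1/2) n"
proof (induction n)
  case 0
  then show ?case
    by (simp add: central_moment_def coeff_pairing_def abs_moment_scale_def)
next
  case (Suc n)
  have "real ((2 * n) choose n) = fact (2 * n) / (fact n * fact n)"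
    by (simp add: binomial_fact mult_2)
  then have central_coeff: "coeff ([:1, 0, 1:] ^ (2 * n) :: real poly) (2 * n) = 4 ^ n * pochhammer (1/2) n / fact n"
    unfolding coeff_sq_plus_one_power_even by (simp add: fact_double power_mult)
  have odd_coeff: "coeff ([:1, 0, 1:] * [:1, 0, 1:] ^ (2 * n) :: real poly) (Suc (2 * n)) = 0"
    using coeff_sq_plus_one_power_odd [of "Suc (2 * n)" "Suc (2 * n)"] by (simp only: power_Suc) simp
  have "central_moment abs (2 * Suc n) ([:1, 0, 1:] ^ (2 * Suc n))
      = central_moment abs (Suc (Suc (2 * n))) ([:1, 0, 1:] * ([:1, 0, 1:] * [:1, 0, 1:] ^ (2 * n)))"
    by (simp add: mult.assoc)
  also have "\<dots> = 4 * central_moment abs (2 * n) ([:1, 0, 1:] ^ (2 * n)) + 4 * coeff ([:1, 0, 1:] ^ (2 * n)) (2 * n)"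
    by (simp only: abs_moment_sq_plus_one_mult odd_coeff) simp
  also have "\<dots> = abs_moment_scale (Suc n) * pochhammer (1/2) (Suc n)"
    unfolding Suc.IH central_coeff abs_moment_scale_Suc abs_moment_scale_def [of n] pochhammer_Suc
    by (simp add: field_simps)
  finally show ?case .
qed

lemma abs_moment_Q_poly_even:
  "a \<le> n \<Longrightarrow> central_moment abs (2 * n) (Q_poly (2 * n) (2 * a)) = abs_moment_scale n * half_poch_weight n a"
proof (induction a arbitrary: n)
  case 0
  then show ?case
    by (simp add: Q_poly_def abs_moment_sq_plus_one_power half_poch_weight_def)
next
  case (Suc a)
  then obtain n' where n: "n = Suc n'" and a: "a \<le> n'"
    by (cases n) auto
  have "central_moment abs (2 * n) (Q_poly (2 * n) (2 * Suc a))
      = central_moment abs (2 * n' + 2) (Q_poly (2 * n' + 2) (2 * a + 2))"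
    by (simp add: n)
  also have "\<dots> = central_moment abs (2 * n' + 2) (Q_poly (2 * n' + 2) (2 * a))
                  - 4 * central_moment abs (2 * n') (Q_poly (2 * n') (2 * a))"
    using a by (intro central_moment_Q_poly_add_2) simp
  also have "\<dots> = abs_moment_scale (Suc n') * half_poch_weight (Suc n') a
                  - 4 * (abs_moment_scale n' * half_poch_weight n' a)"
    using Suc.IH [of "Suc n'"] Suc.IH [of n'] a by simp
  also have "\<dots> = abs_moment_scale n * half_poch_weight n (Suc a)"
  proof -
    have Suc_diff: "Suc n' - a = Suc (n' - a)" and real_diff: "real (n' - a) = real n' - real a"
      using a by (simp_all add: Suc_diff_le of_nat_diff)
    show ?thesis
      unfolding n half_poch_weight_def abs_moment_scale_Suc abs_moment_scale_def [of n'] Suc_diff pochhammer_Suc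
      by (simp add: real_diff field_simps)
  qed
  finally show ?case .
qed

lemma sq_moment_sq_plus_one_power: "central_moment (\<lambda>t. t\<^sup>2) L ([:1, 0, 1:] ^ L) = real L * 2 ^ L"
proof (induction L)
  case 0
  then show ?case
    by (simp add: central_moment_def coeff_pairing_def)
next
  case (Suc L)
  have "central_moment (\<lambda>t. t\<^sup>2) (Suc L) ([:1, 0, 1:] ^ Suc L)
      = 2 * central_moment (\<lambda>t. t\<^sup>2) L ([:1, 0, 1:] ^ L) + 2 * poly ([:1, 0, 1:] ^ L) 1"
    by (simp only: power_Suc sq_moment_sq_plus_one_mult)
  then show ?case
    by (simp add: Suc.IH poly_power algebra_simps)
qed

lemma sq_moment_Q_poly:
  "2 * k \<le> L \<Longrightarrow> central_moment (\<lambda>t. t\<^sup>2) L (Q_poly L (2 * k))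
     = (if k = 0 then real L * 2 ^ L else if k = 1 then 2 ^ (L + 1) else 0)"
proof (induction k arbitrary: L)
  case 0
  then show ?case
    by (simp add: Q_poly_def sq_moment_sq_plus_one_power)
next
  case (Suc k)
  obtain L' where L: "L = L' + 2" and k: "2 * k \<le> L'"
    using Suc.prems by (intro that [of "L - 2"]) auto
  have "central_moment (\<lambda>t. t\<^sup>2) L (Q_poly L (2 * Suc k))
      = central_moment (\<lambda>t. t\<^sup>2) (L' + 2) (Q_poly (L' + 2) (2 * k))
        - 4 * central_moment (\<lambda>t. t\<^sup>2) L' (Q_poly L' (2 * k))"
    using central_moment_Q_poly_add_2 [OF k] by (simp add: L)
  also have "\<dots> = (if Suc k = 0 then real L * 2 ^ L else if Suc k = 1 then 2 ^ (L + 1) else 0)"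
    using Suc.IH [of "L' + 2"] Suc.IH [of L'] k by (simp add: L algebra_simps power_add)
  finally show ?case .
qed

section \<open>Binomial sums of products of absolute moments\<close>

lemma Q_poly_product_expansion:
  assumes "M + K \<le> N"
  shows "(\<Sum>r\<le>M. \<Sum>s\<le>K. real (M choose r) * real (K choose s)
            * (poly (Q_poly N (r + s)) z * poly (Q_poly N (r + K - s)) w))
       = 2 ^ (M + K) * ((1 + z\<^sup>2) * (1 + w\<^sup>2)) ^ (N - (M + K)) * poly (Q_poly (M + K) K) (z * w)"
proof -
  define S U W V where "S = 1 + z\<^sup>2" and "U = z\<^sup>2 - 1" and "W = 1 + w\<^sup>2" and "V = w\<^sup>2 - 1"
  have "poly (Q_poly N (r + s)) z * poly (Q_poly N (r + K - s)) w
      = (S * W) ^ (N - (M + K)) * ((U * V) ^ r * (S * W) ^ (M - r) * ((U * W) ^ s * (S * V) ^ (K - s)))"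
    if "r \<le> M" "s \<le> K" for r s
  proof -
    have exps: "N - (r + s) = (N - (M + K)) + (M - r) + (K - s)" "r + K - s = r + (K - s)"
      "N - (r + (K - s)) = (N - (M + K)) + (M - r) + s"
      using that assms by auto
    show ?thesis
      unfolding poly_Q_poly S_def [symmetric] U_def [symmetric] V_def [symmetric] W_def [symmetric] exps
      by (simp only: power_add power_mult_distrib mult_ac)
  qed
  then have "(\<Sum>r\<le>M. \<Sum>s\<le>K. real (M choose r) * real (K choose s)
            * (poly (Q_poly N (r + s)) z * poly (Q_poly N (r + K - s)) w))
      = (S * W) ^ (N - (M + K)) * ((\<Sum>r\<le>M. real (M choose r) * (U * V) ^ r * (S * W) ^ (M - r))
          * (\<Sum>s\<le>K. real (K choose s) * (U * W) ^ s * (S * V) ^ (K - s)))"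
    by (simp add: sum_product sum_distrib_left mult_ac)
  also have "\<dots> = (S * W) ^ (N - (M + K)) * ((U * V + S * W) ^ M * (U * W + S * V) ^ K)"
    by (simp only: binomial_ring)
  also have "U * V + S * W = 2 * (1 + (z * w)\<^sup>2)"
    by (simp add: S_def U_def V_def W_def algebra_simps power_mult_distrib)
  also have "U * W + S * V = 2 * ((z * w)\<^sup>2 - 1)"
    by (simp add: S_def U_def V_def W_def algebra_simps power_mult_distrib)
  finally show ?thesis
    by (simp only: poly_Q_poly S_def W_def diff_add_inverse2 power_add power_mult_distrib mult_ac)
qed

lemma abs_moment_Q_poly_products:
  assumes "M + K \<le> N"
  shows "(\<Sum>r\<le>M. \<Sum>s\<le>K. real (M choose r) * real (K choose s)
            * (central_moment abs N (Q_poly N (r + s)) * central_moment abs N (Q_poly N (r + K - s))))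
       = 2 ^ (M + K) * (\<Sum>t\<le>2 * (M + K). coeff (Q_poly (M + K) K) t
            * (central_moment abs N ([:1, 0, 1:] ^ (N - (M + K)) * monom 1 t))\<^sup>2)"
proof -
  define a P R where "a = (\<lambda>(r, s). real (M choose r) * real (K choose s))"
    and "P = (\<lambda>(r, s). Q_poly N (r + s))" and "R = (\<lambda>(r, s). Q_poly N (r + K - s))"
  define b U where "b t = 2 ^ (M + K) * coeff (Q_poly (M + K) K) t"
    and "U t = [:1, 0, 1:] ^ (N - (M + K)) * monom (1 :: real) t" for t
  have "(\<Sum>i\<in>{..M} \<times> {..K}. a i * (poly (P i) z * poly (R i) w))
      = (\<Sum>t\<in>{..2 * (M + K)}. b t * (poly (U t) z * poly (U t) w))" for z w
  proof -
    have "poly (Q_poly (M + K) K) (z * w) = (\<Sum>t\<le>2 * (M + K). coeff (Q_poly (M + K) K) t * (z * w) ^ t)"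
      by (simp add: poly_altdef degree_Q_poly)
    then show ?thesis
      using Q_poly_product_expansion [OF assms, of z w]
      by (simp add: a_def P_def R_def b_def U_def sum.cartesian_product' poly_monom
          sum_distrib_left power_mult_distrib power2_eq_square mult_ac)
  qed
  then have "(\<Sum>i\<in>{..M} \<times> {..K}. a i * (central_moment abs N (P i) * central_moment abs N (R i)))
      = (\<Sum>t\<in>{..2 * (M + K)}. b t * (central_moment abs N (U t) * central_moment abs N (U t)))"
    unfolding central_moment_def by (intro coeff_pairing_bilinear) auto
  then show ?thesis
    by (simp add: a_def P_def R_def b_def U_def sum.cartesian_product' sum_distrib_left
        power2_eq_square mult_ac)
qed

lemma abs_diff_pair_even:
  assumes "even t" "even N" "N \<noteq> 0"
  shows "\<bar>real t - real N\<bar> + \<bar>real (t + 2) - real N\<bar> = 2 * \<bar>real t - real (N - 1)\<bar>"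
proof (cases "t < N")
  case True
  with assms(1,2) have "t + 2 \<le> N"
    by (auto elim!: evenE)
  then show ?thesis
    using True by (simp add: of_nat_diff)
next
  case False
  then show ?thesis
    using assms(3) by (simp add: of_nat_diff)
qed

lemma abs_moment_Q_poly_products_balanced:
  assumes "M + K = N"
  shows "(\<Sum>r\<le>M. \<Sum>s\<le>K. real (M choose r) * real (K choose s)
            * (central_moment abs N (Q_poly N (r + s)) * central_moment abs N (Q_poly N (r + K - s))))
       = 2 ^ N * central_moment (\<lambda>t. t\<^sup>2) N (Q_poly N K)"
proof -
  have "K \<le> N"
    using assms by simp
  then show ?thesis
    using abs_moment_Q_poly_products [of M K N] assms
    by (simp add: central_moment_def coeff_pairing_monom coeff_pairing_eq_sum [of _ "2 * N"] degree_Q_poly mult.commute)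
qed

lemma abs_moment_Q_poly_products_unbalanced:
  assumes "M + K + 1 = N" and "even N"
  shows "(\<Sum>r\<le>M. \<Sum>s\<le>K. real (M choose r) * real (K choose s)
            * (central_moment abs N (Q_poly N (r + s)) * central_moment abs N (Q_poly N (r + K - s))))
       = 2 ^ (N + 1) * central_moment (\<lambda>t. t\<^sup>2) (N - 1) (Q_poly (N - 1) K)"
proof -
  have weight: "coeff (Q_poly (N - 1) K) t * (central_moment abs N ([:1, 0, 1:] * monom 1 t))\<^sup>2
      = 4 * ((real t - real (N - 1))\<^sup>2 * coeff (Q_poly (N - 1) K) t)" for t
  proof (cases "even t")
    case True
    have "central_moment abs N ([:1, 0, 1:] * monom 1 t) = \<bar>real t - real N\<bar> + \<bar>real (t + 2) - real N\<bar>"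
      unfolding central_moment_def coeff_pairing_sq_plus_one_mult coeff_pairing_monom by simp
    also have "\<dots> = 2 * \<bar>real t - real (N - 1)\<bar>"
      using True assms by (intro abs_diff_pair_even) auto
    finally show ?thesis
      by (simp add: power_mult_distrib)
  qed (simp add: coeff_Q_poly_odd)
  have e: "N - (M + K) = 1" and MK: "M + K = N - 1" and "K \<le> N - 1"
    using assms(1) by auto
  have "(\<Sum>r\<le>M. \<Sum>s\<le>K. real (M choose r) * real (K choose s)
            * (central_moment abs N (Q_poly N (r + s)) * central_moment abs N (Q_poly N (r + K - s))))
      = 2 ^ (N - 1) * (\<Sum>t\<le>2 * (N - 1). coeff (Q_poly (N - 1) K) t
            * (central_moment abs N ([:1, 0, 1:] * monom 1 t))\<^sup>2)"
    using abs_moment_Q_poly_products [of M K N] assms(1) unfolding e MK by simp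
  also have "\<dots> = 2 ^ (N - 1) * (4 * central_moment (\<lambda>t. t\<^sup>2) (N - 1) (Q_poly (N - 1) K))"
    unfolding weight using \<open>K \<le> N - 1\<close>
    by (simp add: central_moment_def coeff_pairing_eq_sum [of _ "2 * (N - 1)"] degree_Q_poly sum_distrib_left)
  also have "\<dots> = 2 ^ (N + 1) * central_moment (\<lambda>t. t\<^sup>2) (N - 1) (Q_poly (N - 1) K)"
    using assms(1) by (cases N) (simp_all add: power_add)
  finally show ?thesis .
qed

section \<open>The lattice sums of $H$ and $H'$\<close>

lemma inv_fact_G_eq: "inv_fact_G x = (if 0 \<le> x then inverse (fact (nat x)) else 0)"
proof -
  have "inv_fact_G x = rGamma (of_int (x + 1))"
    by (simp add: inv_fact_G_def)
  also have "\<dots> = (if x + 1 > 0 then inverse (fact (nat (x + 1 - 1))) else 0)"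
    by (rule rGamma_of_int)
  finally show ?thesis
    by auto
qed

lemma poch_G_of_nat: "z \<notin> \<int>\<^sub>\<le>\<^sub>0 \<Longrightarrow> poch_G z (int a) = pochhammer z a"
  by (simp add: poch_G_def pochhammer_Gamma)

lemma minus_half_not_nonpos_Int: "(-1/2 :: real) \<notin> \<int>\<^sub>\<le>\<^sub>0"
proof
  assume "(-1/2 :: real) \<in> \<int>\<^sub>\<le>\<^sub>0"
  then obtain k :: int where "(-1/2 :: real) = of_int k"
    by (auto elim: nonpos_Ints_cases)
  then have "-1 = 2 * k"
    by linarith
  then show False
    by presburger
qed

lemma half_not_nonpos_Int: "(1/2 :: real) \<notin> \<int>\<^sub>\<le>\<^sub>0"
  by (auto dest: nonpos_Ints_nonpos)

lemma H_eq_0: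
  assumes "2 * q - l1 - l2 - k < 0 \<or> l2 - l1 + k < 0 \<or> l1 - l2 + k < 0 \<or> l1 + l2 - k < 0"
  shows "H q l1 l2 k = 0"
  using assms by (auto simp: H_def inv_fact_G_eq)

lemma H_eq_0_if_less: "q < k \<Longrightarrow> H q l1 l2 k = 0"
  by (rule H_eq_0) linarith

lemma H_eq_abs_moments:
  assumes "n \<ge> 1" "m \<le> n" and r: "r \<le> 2 * n - 2 * m" and s: "s \<le> 2 * m"
    and a: "r + s = 2 * a" and b: "r + 2 * m - s = 2 * b"
  shows "H (int n) (int a) (int b) (int m)
       = real ((2 * n - 2 * m) choose r) * real ((2 * m) choose s)
         * (central_moment abs (2 * n) (Q_poly (2 * n) (r + s))
            * central_moment abs (2 * n) (Q_poly (2 * n) (r + 2 * m - s)))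
         / (fact (2 * n - 2 * m) * fact (2 * m) * abs_moment_scale n ^ 2)"
proof -
  have "a \<le> n" "b \<le> n"
    using assms by auto
  have args: "2 * int n - int a - int b - int m = int (2 * n - 2 * m - r)"
    "int b - int a + int m = int (2 * m - s)" "int a - int b + int m = int s"
    "int a + int b - int m = int r" "int n - int a = int (n - a)" "int n - int b = int (n - b)"
    using assms by auto
  have "H (int n) (int a) (int b) (int m)
      = half_poch_weight n a * half_poch_weight n b
        * (inverse (fact r * fact (2 * n - 2 * m - r)) * inverse (fact s * fact (2 * m - s)))"
    unfolding H_def args poch_G_of_nat [OF minus_half_not_nonpos_Int] poch_G_of_nat [OF half_not_nonpos_Int]
    by (simp add: inv_fact_G_eq half_poch_weight_def power_int_add power_int_of_nat [symmetric] mult_ac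
        del: power_int_of_nat)
  also have "inverse (fact r * fact (2 * n - 2 * m - r)) = real ((2 * n - 2 * m) choose r) / fact (2 * n - 2 * m)"
    using r by (simp add: binomial_fact field_simps)
  also have "inverse (fact s * fact (2 * m - s)) = real ((2 * m) choose s) / fact (2 * m)"
    using s by (simp add: binomial_fact field_simps)
  also have "half_poch_weight n a = central_moment abs (2 * n) (Q_poly (2 * n) (r + s)) / abs_moment_scale n"
    using \<open>a \<le> n\<close> assms(1) by (simp add: a abs_moment_Q_poly_even abs_moment_scale_def)
  also have "half_poch_weight n b = central_moment abs (2 * n) (Q_poly (2 * n) (r + 2 * m - s)) / abs_moment_scale n"
    using \<open>b \<le> n\<close> assms(1) by (simp add: b abs_moment_Q_poly_even abs_moment_scale_def)
  finally show ?thesis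
    by (simp add: power2_eq_square mult_ac)
qed

lemma has_sum_finite_support_reindex:
  assumes "finite A" "inj_on g A" and "\<And>x. x \<notin> g ` A \<Longrightarrow> f x = 0"
  shows "(f has_sum (\<Sum>a\<in>A. f (g a))) UNIV"
proof -
  have "(f has_sum sum f (g ` A)) (g ` A)"
    using assms(1) by simp
  then have "(f has_sum (\<Sum>a\<in>A. f (g a))) (g ` A)"
    using sum.reindex [OF assms(2), of f] by simp
  then show ?thesis
    by (subst has_sum_cong_neutral [where T = "g ` A" and g = f]) (auto intro: assms(3))
qed

(* Inverse of $(l_1, l_2) \<mapsto> (l_1 + l_2 - m, l_1 - l_2 + m)$ on pairs with even $r + s$. *)
definition lattice_point :: "nat \<Rightarrow> nat \<times> nat \<Rightarrow> int \<times> int" where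
  "lattice_point m = (\<lambda>(r, s). (int ((r + s) div 2), int ((r + s) div 2 + m - s)))"

lemma inj_on_lattice_point: "inj_on (lattice_point m) {(r, s). s \<le> 2 * m \<and> even (r + s)}"
proof (rule inj_onI, clarify)
  fix r s r' s' assume eq: "lattice_point m (r, s) = lattice_point m (r', s')"
    and "s \<le> 2 * m" "s' \<le> 2 * m" and even: "2 dvd (r + s)" "2 dvd (r' + s')"
  from eq have "(r + s) div 2 = (r' + s') div 2 \<and> (r + s) div 2 + m - s = (r' + s') div 2 + m - s'"
    unfolding lattice_point_def prod.case prod.inject of_nat_eq_iff .
  moreover have "r + s = 2 * ((r + s) div 2)" "r' + s' = 2 * ((r' + s') div 2)"
    using even by (simp_all only: dvd_mult_div_cancel)
  ultimately show "r = r' \<and> s = s'"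
    using \<open>s \<le> 2 * m\<close> \<open>s' \<le> 2 * m\<close> by linarith
qed

lemma H_support:
  assumes "H (int n) l1 l2 (int m) \<noteq> 0"
  shows "(l1, l2) \<in> lattice_point m ` {(r, s). r \<le> 2 * n - 2 * m \<and> s \<le> 2 * m \<and> even (r + s)}"
proof -
  from assms have nonneg: "0 \<le> 2 * int n - l1 - l2 - int m" "0 \<le> l2 - l1 + int m"
    "0 \<le> l1 - l2 + int m" "0 \<le> l1 + l2 - int m"
    by (meson H_eq_0 not_le)+
  then have "0 \<le> l1" "0 \<le> l2"
    by linarith+
  then obtain a b where ab: "l1 = int a" "l2 = int b"
    by (metis nonneg_int_cases)
  with nonneg have "m \<le> a + b" "a \<le> b + m" "b \<le> a + m" "a + b + m \<le> 2 * n"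
    by linarith+
  moreover have sum_eq: "a + b - m + (a + m - b) = 2 * a"
    using \<open>m \<le> a + b\<close> \<open>b \<le> a + m\<close> by linarith
  ultimately have "(a + b - m, a + m - b) \<in> {(r, s). r \<le> 2 * n - 2 * m \<and> s \<le> 2 * m \<and> even (r + s)}"
    unfolding mem_Collect_eq prod.case sum_eq by (intro conjI) simp_all
  moreover have "(l1, l2) = lattice_point m (a + b - m, a + m - b)"
    using \<open>b \<le> a + m\<close> unfolding lattice_point_def prod.case sum_eq by (simp add: ab)
  ultimately show ?thesis
    by (rule rev_image_eqI)
qed

lemma H_weighted_has_sum:
  fixes \<phi> :: "int \<Rightarrow> real"
  assumes "n \<ge> 1" "m \<le> n"
  shows "((\<lambda>(l1, l2). \<phi> (l1 + l2 - int m) * H (int n) l1 l2 (int m)) has_sum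
     (\<Sum>r\<le>2 * n - 2 * m. \<Sum>s\<le>2 * m. \<phi> (int r) * real ((2 * n - 2 * m) choose r) * real ((2 * m) choose s)
        * (central_moment abs (2 * n) (Q_poly (2 * n) (r + s))
           * central_moment abs (2 * n) (Q_poly (2 * n) (r + 2 * m - s))))
     / (fact (2 * n - 2 * m) * fact (2 * m) * abs_moment_scale n ^ 2)) UNIV"
proof -
  define f where "f = (\<lambda>(l1, l2). \<phi> (l1 + l2 - int m) * H (int n) l1 l2 (int m))"
  define F where "F r s = \<phi> (int r) * real ((2 * n - 2 * m) choose r) * real ((2 * m) choose s)
        * (central_moment abs (2 * n) (Q_poly (2 * n) (r + s))
           * central_moment abs (2 * n) (Q_poly (2 * n) (r + 2 * m - s)))
     / (fact (2 * n - 2 * m) * fact (2 * m) * abs_moment_scale n ^ 2)" for r s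
  define A where "A = {(r, s). r \<le> 2 * n - 2 * m \<and> s \<le> 2 * m \<and> even (r + s)}"
  have box: "A \<subseteq> {..2 * n - 2 * m} \<times> {..2 * m}"
    by (auto simp: A_def)
  have "inj_on (lattice_point m) A"
    by (rule inj_on_subset [OF inj_on_lattice_point]) (auto simp: A_def)
  moreover have "f (l1, l2) = 0" if "(l1, l2) \<notin> lattice_point m ` A" for l1 l2
    using that H_support [of n l1 l2 m] by (auto simp: f_def A_def)
  ultimately have "(f has_sum (\<Sum>i\<in>A. f (lattice_point m i))) UNIV"
    by (intro has_sum_finite_support_reindex finite_subset [OF box]) auto
  also have "(\<Sum>i\<in>A. f (lattice_point m i)) = (\<Sum>(r, s)\<in>A. F r s)"
  proof (intro sum.cong refl, clarify)
    fix r s assume "(r, s) \<in> A"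
    then have r: "r \<le> 2 * n - 2 * m" and s: "s \<le> 2 * m" and "2 dvd (r + s)"
      by (simp_all add: A_def)
    define a b where "a = (r + s) div 2" and "b = a + m - s"
    from \<open>2 dvd (r + s)\<close> have a: "r + s = 2 * a"
      unfolding a_def by (simp only: dvd_mult_div_cancel)
    with s have b: "r + 2 * m - s = 2 * b" and "int a + int b - int m = int r"
      unfolding b_def by linarith+
    then have "f (lattice_point m (r, s)) = \<phi> (int r) * H (int n) (int a) (int b) (int m)"
      by (simp add: f_def lattice_point_def a_def [symmetric] b_def [symmetric])
    also have "\<dots> = F r s"
      unfolding F_def H_eq_abs_moments [OF assms r s a b] a b by simp
    finally show "f (lattice_point m (r, s)) = F r s" .
  qed
  also have "\<dots> = (\<Sum>(r, s)\<in>{..2 * n - 2 * m} \<times> {..2 * m}. F r s)"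
  proof (rule sum.mono_neutral_left [OF _ box]; clarsimp)
    fix r s assume "r \<le> 2 * n - 2 * m" "s \<le> 2 * m" "(r, s) \<notin> A"
    then have "odd (r + s)" "r + s \<le> 2 * n"
      using assms(2) by (auto simp: A_def)
    then show "F r s = 0"
      by (simp add: F_def central_moment_Q_poly_odd)
  qed
  finally show ?thesis
    by (simp add: f_def F_def sum.cartesian_product [symmetric] sum_divide_distrib)
qed

lemma H_has_sum:
  assumes "n \<ge> 1" "m \<le> n"
  shows "((\<lambda>(l1, l2). H (int n) l1 l2 (int m)) has_sum
     2 ^ (2 * n) * central_moment (\<lambda>t. t\<^sup>2) (2 * n) (Q_poly (2 * n) (2 * m))
     / (fact (2 * n - 2 * m) * fact (2 * m) * abs_moment_scale n ^ 2)) UNIV"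
  using H_weighted_has_sum [OF assms, of "\<lambda>_. 1"] assms(2)
    abs_moment_Q_poly_products_balanced [of "2 * n - 2 * m" "2 * m" "2 * n"]
  by simp

lemma binomial_absorb_sum:
  "(\<Sum>r\<le>M. real (M - r) * real (M choose r) * Y r) = real M * (\<Sum>r\<le>M - 1. real ((M - 1) choose r) * Y r)"
proof -
  have "real (M - r) * real (M choose r) = real M * real ((M - 1) choose r)" for r
    by (metis binomial_absorb_comp of_nat_mult)
  then have "(\<Sum>r\<le>M. real (M - r) * real (M choose r) * Y r) = real M * (\<Sum>r\<le>M. real ((M - 1) choose r) * Y r)"
    by (simp only: sum_distrib_left mult.assoc)
  also have "\<dots> = real M * (\<Sum>r\<le>M - 1. real ((M - 1) choose r) * Y r)"
    by (cases M) simp_all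
  finally show ?thesis .
qed

lemma H'_has_sum:
  assumes "n \<ge> 1" "m \<le> n"
  shows "((\<lambda>(l1, l2). H' (int n) l1 l2 (int m)) has_sum
     real (2 * n - 2 * m) * 2 ^ (2 * n + 1) * central_moment (\<lambda>t. t\<^sup>2) (2 * n - 1) (Q_poly (2 * n - 1) (2 * m))
     / (fact (2 * n - 2 * m) * fact (2 * m) * abs_moment_scale n ^ 2)) UNIV"
proof -
  define M where "M = 2 * n - 2 * m"
  define Y where "Y r = (\<Sum>s\<le>2 * m. real ((2 * m) choose s)
      * (central_moment abs (2 * n) (Q_poly (2 * n) (r + s))
         * central_moment abs (2 * n) (Q_poly (2 * n) (r + 2 * m - s))))" for r
  have H'_eq: "(\<lambda>(l1, l2). H' (int n) l1 l2 (int m))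
      = (\<lambda>(l1, l2). of_int (int M - (l1 + l2 - int m)) * H (int n) l1 l2 (int m))"
    using assms(2) by (auto simp: H'_def M_def)
  have "(\<Sum>r\<le>M. \<Sum>s\<le>2 * m. of_int (int M - int r) * real (M choose r) * real ((2 * m) choose s)
        * (central_moment abs (2 * n) (Q_poly (2 * n) (r + s))
           * central_moment abs (2 * n) (Q_poly (2 * n) (r + 2 * m - s))))
      = (\<Sum>r\<le>M. real (M - r) * real (M choose r) * Y r)"
    by (intro sum.cong refl) (auto simp: Y_def sum_distrib_left of_nat_diff mult_ac)
  also have "\<dots> = real M * (\<Sum>r\<le>M - 1. real ((M - 1) choose r) * Y r)"
    by (rule binomial_absorb_sum)
  also have "\<dots> = real M * (2 ^ (2 * n + 1) * central_moment (\<lambda>t. t\<^sup>2) (2 * n - 1) (Q_poly (2 * n - 1) (2 * m)))"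
  proof (cases "M = 0")
    case False
    then have "M - 1 + 2 * m + 1 = 2 * n"
      by (simp add: M_def)
    from abs_moment_Q_poly_products_unbalanced [OF this] show ?thesis
      by (simp add: Y_def sum_distrib_left mult_ac)
  qed simp
  finally show ?thesis
    using H_weighted_has_sum [OF assms, of "\<lambda>x. of_int (int M - x)"]
    unfolding H'_eq M_def by (simp add: mult_ac)
qed

lemma c_q_div_eq:
  assumes "n \<ge> 1"
  shows "c_q n / 2 ^ (4 * n) = 2 ^ (2 * n) * 2 ^ (2 * n) * real (2 * n) / (fact (2 * n) * abs_moment_scale n ^ 2)"
proof -
  have "real ((2 * n) choose n) = fact (2 * n) / (fact n * fact n)"
    by (simp add: binomial_fact mult_2)
  moreover have "(2 :: real) ^ (2 * n) = 4 ^ n"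
    by (simp add: power_mult)
  ultimately show ?thesis
    using assms by (simp add: c_q_def abs_moment_scale_def field_simps power2_eq_square)
qed

lemma H_sum_value:
  assumes "n \<ge> 1" "m \<le> n"
  shows "((\<lambda>(l1, l2). H (int n) l1 l2 (int m)) has_sum
     (if m \<ge> 2 then 0 else if m = 1 then (2 * real n - 1) * c_q n / 2 ^ (4 * n) else c_q n / 2 ^ (4 * n))) UNIV"
proof -
  note c = c_q_div_eq [OF assms(1)]
  have sq: "central_moment (\<lambda>t. t\<^sup>2) (2 * n) (Q_poly (2 * n) (2 * m))
      = (if m = 0 then real (2 * n) * 2 ^ (2 * n) else if m = 1 then 2 ^ (2 * n + 1) else 0)"
    using assms(2) by (intro sq_moment_Q_poly) simp
  have total: "2 ^ (2 * n) * central_moment (\<lambda>t. t\<^sup>2) (2 * n) (Q_poly (2 * n) (2 * m))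
      / (fact (2 * n - 2 * m) * fact (2 * m) * abs_moment_scale n ^ 2)
      = (if m \<ge> 2 then 0 else if m = 1 then (2 * real n - 1) * c_q n / 2 ^ (4 * n) else c_q n / 2 ^ (4 * n))"
  proof -
    consider "m = 0" | "m = 1" | "m \<ge> 2"
      by linarith
    then show ?thesis
    proof cases
      case 1
      then show ?thesis
        unfolding sq c by simp
    next
      case 2
      have fact_2n: "fact (2 * n) = 2 * real n * (2 * real n - 1) * (fact (2 * n - 2) :: real)"
        using assms(1) by (cases n) (simp_all add: algebra_simps)
      have "2 * real n - 1 \<noteq> 0" and "abs_moment_scale n \<noteq> 0"
        using assms(1) by (simp_all add: abs_moment_scale_def)
      then have "2 ^ (2 * n) * 2 ^ (2 * n + 1) / (fact (2 * n - 2) * fact 2 * abs_moment_scale n ^ 2)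
          = (2 * real n - 1) * (c_q n / 2 ^ (4 * n))"
        using assms(1) unfolding c fact_2n by (simp add: power_add field_simps)
      then show ?thesis
        unfolding sq using 2 by simp
    next
      case 3
      then show ?thesis
        unfolding sq by simp
    qed
  qed
  from H_has_sum [OF assms] show ?thesis
    unfolding total .
qed

lemma H'_sum_value:
  assumes "n \<ge> 1" "m \<le> n"
  shows "((\<lambda>(l1, l2). H' (int n) l1 l2 (int m)) has_sum
     (if m \<ge> 2 then 0
      else if m = 1 then (2 * real n - 1) * (2 * real n - 2) * c_q n / 2 ^ (4 * n)
      else (2 * real n - 1) * c_q n / 2 ^ (4 * n))) UNIV"
proof -
  have c: "x * c_q n / 2 ^ (4 * n) = x * 2 ^ (2 * n) * 2 ^ (2 * n) * real (2 * n) / (fact (2 * n) * abs_moment_scale n ^ 2)" for x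
  proof -
    have "x * c_q n / 2 ^ (4 * n) = x * (c_q n / 2 ^ (4 * n))"
      by simp
    then show ?thesis
      unfolding c_q_div_eq [OF assms(1)] by simp
  qed
  have K: "abs_moment_scale n \<noteq> 0"
    using assms(1) by (simp add: abs_moment_scale_def)
  have sq: "central_moment (\<lambda>t. t\<^sup>2) (2 * n - 1) (Q_poly (2 * n - 1) (2 * m))
      = (if m = 0 then real (2 * n - 1) * 2 ^ (2 * n - 1) else if m = 1 then 2 ^ (2 * n) else 0)" if "m < n"
    using that by (subst sq_moment_Q_poly) auto
  have total: "real (2 * n - 2 * m) * 2 ^ (2 * n + 1) * central_moment (\<lambda>t. t\<^sup>2) (2 * n - 1) (Q_poly (2 * n - 1) (2 * m))
      / (fact (2 * n - 2 * m) * fact (2 * m) * abs_moment_scale n ^ 2)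
      = (if m \<ge> 2 then 0
         else if m = 1 then (2 * real n - 1) * (2 * real n - 2) * c_q n / 2 ^ (4 * n)
         else (2 * real n - 1) * c_q n / 2 ^ (4 * n))"
  proof -
    consider "m = 0" | "m = 1" "n = 1" | "m = 1" "n \<ge> 2" | "m \<ge> 2" "m = n" | "m \<ge> 2" "m < n"
      using assms by linarith
    then show ?thesis
    proof cases
      case 1
      have "2 * n + 1 + (2 * n - 1) = 2 * n + 2 * n"
        using assms(1) by simp
      then have "(2 :: real) ^ (2 * n + 1) * 2 ^ (2 * n - 1) = 2 ^ (2 * n) * 2 ^ (2 * n)"
        by (metis power_add)
      then have "real (2 * n) * 2 ^ (2 * n + 1) * (real (2 * n - 1) * 2 ^ (2 * n - 1)) / (fact (2 * n) * fact 0 * abs_moment_scale n ^ 2)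
          = (2 * real n - 1) * c_q n / 2 ^ (4 * n)"
        unfolding c using assms(1) by (simp add: of_nat_diff mult_ac)
      moreover have "m < n"
        using 1 assms(1) by simp
      ultimately show ?thesis
        unfolding sq [OF \<open>m < n\<close>] using 1 by simp
    next
      case 2
      then show ?thesis
        by simp
    next
      case 3
      have fact_2n: "fact (2 * n) = 2 * real n * (2 * real n - 1) * (fact (2 * n - 2) :: real)"
        using assms(1) by (cases n) (simp_all add: algebra_simps)
      have "2 * real n - 1 \<noteq> 0"
        using assms(1) by simp
      then have "real (2 * n - 2) * 2 ^ (2 * n + 1) * 2 ^ (2 * n) / (fact (2 * n - 2) * fact 2 * abs_moment_scale n ^ 2)
          = (2 * real n - 1) * (2 * real n - 2) * c_q n / 2 ^ (4 * n)"
        unfolding c fact_2n using assms(1) K by (simp add: of_nat_diff field_simps)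
      moreover have "m < n"
        using 3 by simp
      ultimately show ?thesis
        unfolding sq [OF \<open>m < n\<close>] using 3 by simp
    next
      case 4
      then show ?thesis
        by simp
    next
      case 5
      then show ?thesis
        unfolding sq [OF \<open>m < n\<close>] by simp
    qed
  qed
  from H'_has_sum [OF assms] show ?thesis
    unfolding total .
qed

theorem proposition7p3:
  fixes q k :: int
  assumes "q \<ge> 1" and "k \<ge> 0"
  shows "(((\<lambda>(l1, l2). H q l1 l2 k) has_sum
           (if k \<ge> 2 then 0
            else if k = 1 then (2 * of_int q - 1) * c_q (nat q) / 2 ^ (4 * nat q)
            else c_q (nat q) / 2 ^ (4 * nat q))) (UNIV :: (int \<times> int) set))
       \<and> (((\<lambda>(l1, l2). H' q l1 l2 k) has_sum
           (if k \<ge> 2 then 0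
            else if k = 1 then (2 * of_int q - 1) * (2 * of_int q - 2) * c_q (nat q) / 2 ^ (4 * nat q)
            else (2 * of_int q - 1) * c_q (nat q) / 2 ^ (4 * nat q))) (UNIV :: (int \<times> int) set))"
proof -
  obtain n m where q: "q = int n" and k: "k = int m" and "n \<ge> 1"
    using assms by (metis nonneg_int_cases of_nat_le_iff of_nat_1 order_trans zero_le_one)
  show ?thesis
  proof (cases "m \<le> n")
    case True
    have params: "(2 \<le> k) = (2 \<le> m)" "(k = 1) = (m = 1)" "nat q = n" "(of_int q :: real) = real n"
      by (simp_all add: q k)
    show ?thesis
      unfolding params unfolding q k
      using H_sum_value [OF \<open>n \<ge> 1\<close> True] H'_sum_value [OF \<open>n \<ge> 1\<close> True] by (rule conjI)
  next
    case False
    then have "H q l1 l2 k = 0" for l1 l2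
      by (simp add: q k H_eq_0_if_less)
    then have "(\<lambda>(l1, l2). H q l1 l2 k) = (\<lambda>_. 0)" and "(\<lambda>(l1, l2). H' q l1 l2 k) = (\<lambda>_. 0)"
      by (auto simp: H'_def)
    moreover have "k \<ge> 2"
      using False \<open>n \<ge> 1\<close> by (simp add: k)
    ultimately show ?thesis
      by simp
  qed
qed

end
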